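(* Let $R\subseteq\mathbb R$ be an archimedean real closed field and $\overline F$ a field with $R\subseteq\overline F\subseteq\mathbb R$. Then the map $\iota_{\overline F|R}:M(R(y))\to M(\overline F(y))$, $\zeta\mapsto\zeta_{\overline F}$, is a continuous injective map compatible with restriction. If $\overline F$ is real closed, then it is a homeomorphism onto $M(\overline F(y))$.
   Context: For a field $K$, $M(K)$ is the set of $\mathbb R$-places $K\to\mathbb R\cup\{\infty\}$, with topology generated by the subbasis $H'(b)=\{\zeta\in M(K)\mid \infty\ne\zeta(b)>0\}$, $b\in K$. Every $\zeta\in M(R(y))$ is the identity on $R$; its constant extension $\zeta_{\overline F}$ is the unique $\mathbb R$-place of $\overline F(y)$ which is the identity on $\overline F$ and satisfies $\zeta_{\overline F}(y)=\zeta(y)$. Compatible with restriction means $\zeta_{\overline F}|_{R(y)}=\zeta$. *)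

theory Defs
  imports "HOL-Analysis.Analysis" "HOL-Computational_Algebra.Polynomial" "HOL-Computational_Algebra.Fraction_Field"
begin

definition real_subfield :: "real set \<Rightarrow> bool" where
  "real_subfield S \<longleftrightarrow> 0 \<in> S \<and> 1 \<in> S \<and>
     (\<forall>a\<in>S. \<forall>b\<in>S. a + b \<in> S \<and> a * b \<in> S) \<and>
     (\<forall>a\<in>S. - a \<in> S \<and> inverse a \<in> S)"

definition real_closed_subfield :: "real set \<Rightarrow> bool" where
  "real_closed_subfield S \<longleftrightarrow> real_subfield S \<and>
     (\<forall>a\<in>S. a > 0 \<longrightarrow> (\<exists>b\<in>S. b * b = a)) \<and>
     (\<forall>p :: real poly. (\<forall>i. coeff p i \<in> S) \<and> odd (degree p) \<longrightarrow>
        (\<exists>x\<in>S. poly p x = 0))"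

definition ratfun_field :: "real set \<Rightarrow> real poly fract set" where
  "ratfun_field S = {Fract p q | p q.
      (\<forall>i. coeff p i \<in> S) \<and> (\<forall>i. coeff q i \<in> S) \<and> q \<noteq> 0}"

definition var_y :: "real poly fract" where
  "var_y = Fract [:0, 1:] 1"

definition const_fract :: "real \<Rightarrow> real poly fract" where
  "const_fract c = Fract [:c:] 1"

text \<open>R-places of a field K (a subfield of the ambient field type): maps K \<rightarrow> R \<union> {\<infinity>},
  with \<infinity> represented by None.  The finite part is a valuation ring of K on which the
  map is a ring homomorphism into R; the value \<infinity> is attained exactly at the nonzero
  elements whose inverse is sent to 0.  Outside K the map is normalised to None.\<close>
definition real_place :: "'a::field set \<Rightarrow> ('a \<Rightarrow> real option) \<Rightarrow> bool" where
  "real_place K \<zeta> \<longleftrightarrow>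
     (\<forall>a. a \<notin> K \<longrightarrow> \<zeta> a = None) \<and>
     \<zeta> 1 = Some 1 \<and>
     (\<forall>a\<in>K. \<zeta> a = None \<longleftrightarrow> (a \<noteq> 0 \<and> \<zeta> (inverse a) = Some 0)) \<and>
     (\<forall>a\<in>K. \<forall>b\<in>K. \<zeta> a \<noteq> None \<and> \<zeta> b \<noteq> None \<longrightarrow>
        \<zeta> (a + b) = Some (the (\<zeta> a) + the (\<zeta> b)) \<and>
        \<zeta> (a * b) = Some (the (\<zeta> a) * the (\<zeta> b)))"

definition places :: "'a::field set \<Rightarrow> ('a \<Rightarrow> real option) set" where
  "places K = {\<zeta>. real_place K \<zeta>}"

definition Hsub :: "'a::field set \<Rightarrow> 'a \<Rightarrow> ('a \<Rightarrow> real option) set" where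
  "Hsub K b = {\<zeta> \<in> places K. \<zeta> b \<noteq> None \<and> the (\<zeta> b) > 0}"

text \<open>The topology on M(K) generated by the subbasis {H'(b) | b \<in> K}
  (M(K) itself is added so that the topspace is M(K); note M(K) = H'(1) anyway).\<close>
definition places_top :: "'a::field set \<Rightarrow> ('a \<Rightarrow> real option) topology" where
  "places_top K = topology_generated_by (insert (places K) {Hsub K b | b. b \<in> K})"

definition is_const_ext :: "real set \<Rightarrow> (real poly fract \<Rightarrow> real option)
      \<Rightarrow> (real poly fract \<Rightarrow> real option) \<Rightarrow> bool" where
  "is_const_ext F \<zeta> \<xi> \<longleftrightarrow> \<xi> \<in> places (ratfun_field F) \<and>
     (\<forall>c\<in>F. \<xi> (const_fract c) = Some c) \<and> \<xi> var_y = \<zeta> var_y"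

definition const_ext :: "real set \<Rightarrow> (real poly fract \<Rightarrow> real option)
      \<Rightarrow> (real poly fract \<Rightarrow> real option)" where
  "const_ext F \<zeta> = (THE \<xi>. is_const_ext F \<zeta> \<xi>)"

end

theory Submission
  imports Defs
begin

text \<open>
  An \<real>-place of R(y) restricts to an \<real>-place of R. As positive elements of R are squares, that
  place is monotone on R; it fixes \<rat>, so by density of \<rat> in \<real> it is the identity on R.
  An \<real>-place \<xi> of S(y) that is the identity on S is determined by \<xi>(y): for finite \<xi>(y) = a it
  agrees with evaluation at a on S[y], and a Bezout identity in S[y] extends this to all of S(y);
  for \<xi>(y) = \<infinity> it sends 1/y to 0, and \<xi>(p/q) is read off from leading coefficients. Conversely,
  evaluation at a point of \<real> \<union> {\<infinity>} is an \<real>-place of \<real>(y). So the constant extension of \<zeta> is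
  evaluation at \<zeta>(y), which restricts to \<zeta> and is injective in \<zeta>. It is continuous because every
  set {w. b(w) > 0} with b \<in> F(y) contains around each of its points a set {w. c(w) > 0} with
  c \<in> \<rat>(y) \<subseteq> R(y), a basic open set of M(R(y)). When F is real closed too, restriction to R(y) is
  a continuous inverse.
\<close>

definition subfield :: "'a::field set \<Rightarrow> bool" where
  "subfield K \<longleftrightarrow> 0 \<in> K \<and> 1 \<in> K \<and> (\<forall>a\<in>K. \<forall>b\<in>K. a + b \<in> K \<and> a * b \<in> K) \<and>
     (\<forall>a\<in>K. - a \<in> K \<and> inverse a \<in> K)"

lemma real_subfield_eq_subfield: "real_subfield = subfield"
  by (simp add: fun_eq_iff real_subfield_def subfield_def)

definition poly_over :: "'a::zero set \<Rightarrow> 'a poly \<Rightarrow> bool" where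
  "poly_over K p \<longleftrightarrow> (\<forall>i. coeff p i \<in> K)"

context
  fixes K :: "'a::field set"
  assumes K: "subfield K"
begin

lemma subfield_0: "0 \<in> K"
  and subfield_1: "1 \<in> K"
  and subfield_add: "a \<in> K \<Longrightarrow> b \<in> K \<Longrightarrow> a + b \<in> K"
  and subfield_mult: "a \<in> K \<Longrightarrow> b \<in> K \<Longrightarrow> a * b \<in> K"
  and subfield_uminus: "a \<in> K \<Longrightarrow> - a \<in> K"
  and subfield_inverse: "a \<in> K \<Longrightarrow> inverse a \<in> K"
  using K unfolding subfield_def by auto

lemma subfield_diff: "a \<in> K \<Longrightarrow> b \<in> K \<Longrightarrow> a - b \<in> K"
  using subfield_add[of a "- b"] subfield_uminus[of b] by simp

lemma subfield_divide: "a \<in> K \<Longrightarrow> b \<in> K \<Longrightarrow> a / b \<in> K"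
  using subfield_mult[of a "inverse b"] subfield_inverse[of b] by (simp add: divide_inverse)

lemma subfield_power: "a \<in> K \<Longrightarrow> a ^ n \<in> K"
  by (induction n) (simp_all add: subfield_1 subfield_mult)

lemma subfield_of_nat: "of_nat n \<in> K"
  by (induction n) (simp_all add: subfield_0 subfield_1 subfield_add)

lemma subfield_of_int: "of_int i \<in> K"
  by (cases i rule: int_cases2) (simp_all add: subfield_of_nat subfield_uminus)

lemma subfield_sum: "(\<And>i. i \<in> A \<Longrightarrow> f i \<in> K) \<Longrightarrow> sum f A \<in> K"
  by (induction A rule: infinite_finite_induct) (simp_all add: subfield_0 subfield_add)

lemma poly_over_0: "poly_over K 0"
  by (simp add: poly_over_def subfield_0)

lemma poly_over_pCons_iff: "poly_over K (pCons c p) \<longleftrightarrow> c \<in> K \<and> poly_over K p"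
  unfolding poly_over_def
  by (metis coeff_pCons_0 coeff_pCons_Suc not0_implies_Suc coeff_pCons)

lemma poly_over_const: "c \<in> K \<Longrightarrow> poly_over K [:c:]"
  by (simp add: poly_over_pCons_iff poly_over_0)

lemma poly_over_1: "poly_over K 1"
  using poly_over_const[OF subfield_1] by (simp add: one_pCons)

lemma poly_over_X: "poly_over K [:0, 1:]"
  by (simp add: poly_over_pCons_iff poly_over_0 subfield_0 subfield_1)

lemma poly_over_add: "poly_over K p \<Longrightarrow> poly_over K q \<Longrightarrow> poly_over K (p + q)"
  by (simp add: poly_over_def subfield_add)

lemma poly_over_diff: "poly_over K p \<Longrightarrow> poly_over K q \<Longrightarrow> poly_over K (p - q)"
  by (simp add: poly_over_def subfield_diff)

lemma poly_over_mult: "poly_over K p \<Longrightarrow> poly_over K q \<Longrightarrow> poly_over K (p * q)"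
  unfolding poly_over_def coeff_mult by (intro allI subfield_sum subfield_mult) auto

lemma poly_over_power: "poly_over K p \<Longrightarrow> poly_over K (p ^ n)"
  by (induction n) (simp_all add: poly_over_1 poly_over_mult)

lemma poly_over_cancel_leading_term:
  assumes h: "poly_over K h" "h \<noteq> 0" and p: "poly_over K p" "p \<noteq> 0" "degree h \<le> degree p"
  obtains m where "poly_over K m" "p - m * h = 0 \<or> degree (p - m * h) < degree p"
proof -
  define c where "c = lead_coeff p / lead_coeff h"
  define m where "m = monom c (degree p - degree h)"
  have "poly_over K m"
    using p h unfolding m_def c_def poly_over_def by (simp add: coeff_monom subfield_0 subfield_divide)
  have "c \<noteq> 0"
    using h p by (simp add: c_def)
  then have "degree (m * h) = degree p"
    using h p by (simp add: m_def degree_monom_eq degree_mult_eq)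
  moreover have "lead_coeff (m * h) = lead_coeff p"
    using \<open>c \<noteq> 0\<close> h by (simp add: m_def c_def lead_coeff_mult degree_monom_eq)
  ultimately have "p - m * h = 0 \<or> degree (p - m * h) < degree p"
    by (metis (no_types) degree_diff_le diff_self le_neq_implies_less coeff_diff
        leading_coeff_0_iff order_refl)
  then show ?thesis
    using that \<open>poly_over K m\<close> by blast
qed

lemma poly_over_divmod:
  assumes h: "poly_over K h" "h \<noteq> 0" and p: "poly_over K p"
  shows "\<exists>s r. poly_over K s \<and> poly_over K r \<and> p = s * h + r \<and> (r = 0 \<or> degree r < degree h)"
  using p
proof (induction "if p = 0 then 0 else Suc (degree p)" arbitrary: p rule: less_induct)
  case less
  show ?case
  proof (cases "p = 0 \<or> degree p < degree h")
    case True
    then show ?thesis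
      using less.prems poly_over_0 by (intro exI[of _ 0] exI[of _ p]) auto
  next
    case False
    then obtain m where m: "poly_over K m" "p - m * h = 0 \<or> degree (p - m * h) < degree p"
      using poly_over_cancel_leading_term[OF h less.prems] by fastforce
    then have "(if p - m * h = 0 then 0 else Suc (degree (p - m * h))) < Suc (degree p)"
      by auto
    moreover have "poly_over K (p - m * h)"
      using less.prems m(1) h(1) by (simp add: poly_over_diff poly_over_mult)
    ultimately obtain s r where sr: "poly_over K s" "poly_over K r" "p - m * h = s * h + r"
      "r = 0 \<or> degree r < degree h"
      using less.hyps[of "p - m * h"] False by auto
    have "p = (s + m) * h + r"
      using sr(3) by (simp add: algebra_simps)
    then show ?thesis
      using sr m(1) by (blast intro: poly_over_add)
  qed
qed

lemma poly_over_gcd: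
  assumes p: "poly_over K p" and q: "poly_over K q" "q \<noteq> 0"
  obtains h f g s t where "poly_over K f" "poly_over K g" "poly_over K s" "poly_over K t"
    "h \<noteq> 0" "h = f * p + g * q" "p = s * h" "q = t * h"
proof -
  define I where "I = {h. h \<noteq> 0 \<and> (\<exists>f g. poly_over K f \<and> poly_over K g \<and> h = f * p + g * q)}"
  have "q \<in> I"
    unfolding I_def using q poly_over_0 poly_over_1 by (intro CollectI conjI exI[of _ 0] exI[of _ 1]) auto
  then obtain h where "h \<in> I" and h_min: "\<forall>h'\<in>I. degree h \<le> degree h'"
    using ex_has_least_nat[of "\<lambda>h. h \<in> I" q degree] by blast
  then obtain f g where fg: "poly_over K f" "poly_over K g" "h = f * p + g * q" and "h \<noteq> 0"
    unfolding I_def by blast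
  have h: "poly_over K h"
    using fg p q by (simp add: poly_over_add poly_over_mult)
  \<comment> \<open>h divides every combination: the remainder modulo h is again one, of smaller degree\<close>
  have h_dvd: "\<exists>s. poly_over K s \<and> x = s * h"
    if "poly_over K a" "poly_over K b" "x = a * p + b * q" for x a b
  proof -
    have "poly_over K x"
      using that p q by (simp add: poly_over_add poly_over_mult)
    then obtain s r where sr: "poly_over K s" "poly_over K r" "x = s * h + r" "r = 0 \<or> degree r < degree h"
      using poly_over_divmod[OF h \<open>h \<noteq> 0\<close>] by blast
    have "r = (a - s * f) * p + (b - s * g) * q"
      using sr(3) that(3) fg(3) by (simp add: algebra_simps)
    moreover have "poly_over K (a - s * f)" "poly_over K (b - s * g)"
      using sr fg that by (simp_all add: poly_over_diff poly_over_mult)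
    ultimately have "r \<noteq> 0 \<Longrightarrow> r \<in> I"
      unfolding I_def by blast
    then have "r = 0"
      using h_min sr(4) by fastforce
    then show ?thesis
      using sr by auto
  qed
  show ?thesis
    using that[OF fg(1,2) _ _ \<open>h \<noteq> 0\<close> fg(3)] h_dvd[of 1 0 p] h_dvd[of 0 1 q] poly_over_0 poly_over_1
    by auto
qed

lemma poly_over_Fract_coprime:
  assumes p: "poly_over K p" and q: "poly_over K q" "q \<noteq> 0"
  shows "\<exists>s t f g. poly_over K s \<and> poly_over K t \<and> t \<noteq> 0 \<and> poly_over K f \<and> poly_over K g \<and>
           Fract p q = Fract s t \<and> f * s + g * t = 1"
proof -
  obtain h f g s t where fgst: "poly_over K f" "poly_over K g" "poly_over K s" "poly_over K t"
    and "h \<noteq> 0" "h = f * p + g * q" "p = s * h" "q = t * h"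
    using poly_over_gcd[OF assms] .
  have "t \<noteq> 0"
    using \<open>q = t * h\<close> q(2) by auto
  then have "Fract p q = Fract s t"
    using \<open>p = s * h\<close> \<open>q = t * h\<close> \<open>h \<noteq> 0\<close> by (simp add: eq_fract)
  moreover have "(f * s + g * t) * h = 1 * h"
    using \<open>h = f * p + g * q\<close> \<open>p = s * h\<close> \<open>q = t * h\<close> by (simp add: algebra_simps)
  then have "f * s + g * t = 1"
    using \<open>h \<noteq> 0\<close> by (metis mult_cancel_right)
  ultimately show ?thesis
    using fgst \<open>t \<noteq> 0\<close> by blast
qed

end

abbreviation to_fract :: "real poly \<Rightarrow> real poly fract" where
  "to_fract p \<equiv> Fract p 1"

lemma Fract_eq_0_iff: "q \<noteq> 0 \<Longrightarrow> Fract p q = 0 \<longleftrightarrow> p = 0"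
  by (simp add: Zero_fract_def eq_fract)

lemma ratfun_field_Fract:
  "poly_over S p \<Longrightarrow> poly_over S q \<Longrightarrow> q \<noteq> 0 \<Longrightarrow> Fract p q \<in> ratfun_field S"
  unfolding ratfun_field_def poly_over_def by blast

lemma ratfun_fieldE:
  assumes "b \<in> ratfun_field S"
  obtains p q where "poly_over S p" "poly_over S q" "q \<noteq> 0" "b = Fract p q"
  using assms unfolding ratfun_field_def poly_over_def by blast

lemma ratfun_field_mono: "S \<subseteq> T \<Longrightarrow> ratfun_field S \<subseteq> ratfun_field T"
  unfolding ratfun_field_def by blast

context
  fixes S :: "real set"
  assumes S: "subfield S"
begin

lemma to_fract_in_ratfun_field: "poly_over S p \<Longrightarrow> to_fract p \<in> ratfun_field S"
  by (simp add: ratfun_field_Fract poly_over_1 S)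

lemma subfield_ratfun_field: "subfield (ratfun_field S)"
  unfolding subfield_def
proof (intro conjI ballI)
  show "0 \<in> ratfun_field S" "1 \<in> ratfun_field S"
    using to_fract_in_ratfun_field[OF poly_over_0[OF S]] to_fract_in_ratfun_field[OF poly_over_1[OF S]]
    by (simp_all add: Zero_fract_def One_fract_def)
  fix a assume "a \<in> ratfun_field S"
  then obtain p q where a: "poly_over S p" "poly_over S q" "q \<noteq> 0" "a = Fract p q"
    by (rule ratfun_fieldE)
  show "- a \<in> ratfun_field S"
    using a poly_over_diff[OF S poly_over_0[OF S] a(1)] by (simp add: ratfun_field_Fract)
  show "inverse a \<in> ratfun_field S"
    using a \<open>0 \<in> ratfun_field S\<close> by (cases "p = 0") (simp_all add: ratfun_field_Fract fract_collapse)
  fix b assume "b \<in> ratfun_field S"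
  then obtain r s where b: "poly_over S r" "poly_over S s" "s \<noteq> 0" "b = Fract r s"
    by (rule ratfun_fieldE)
  show "a + b \<in> ratfun_field S" "a * b \<in> ratfun_field S"
    using a b by (simp_all add: ratfun_field_Fract poly_over_add poly_over_mult S)
qed

lemma const_fract_in_ratfun_field: "c \<in> S \<Longrightarrow> const_fract c \<in> ratfun_field S"
  unfolding const_fract_def by (intro to_fract_in_ratfun_field poly_over_const[OF S])

lemma var_y_in_ratfun_field: "var_y \<in> ratfun_field S"
  unfolding var_y_def by (intro to_fract_in_ratfun_field poly_over_X[OF S])

lemma inverse_var_y_power_in_ratfun_field: "inverse var_y ^ n \<in> ratfun_field S"
  using subfield_ratfun_field var_y_in_ratfun_field subfield_inverse subfield_power by blast

end

lemma const_fract_add: "const_fract (c + d) = const_fract c + const_fract d"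
  by (simp add: const_fract_def)

lemma const_fract_mult: "const_fract (c * d) = const_fract c * const_fract d"
  by (simp add: const_fract_def mult.commute)

lemma const_fract_1: "const_fract 1 = 1"
  by (simp add: const_fract_def One_fract_def one_pCons[symmetric])

lemma const_fract_inverse: "const_fract (inverse c) = inverse (const_fract c)"
  by (cases "c = 0") (simp_all add: const_fract_def fract_collapse eq_fract)

lemma const_fract_eq_0_iff: "const_fract c = 0 \<longleftrightarrow> c = 0"
  by (simp add: const_fract_def Fract_eq_0_iff)

definition place_restrict :: "'a set \<Rightarrow> ('a \<Rightarrow> real option) \<Rightarrow> 'a \<Rightarrow> real option" where
  "place_restrict L \<zeta> b = (if b \<in> L then \<zeta> b else None)"

locale place =
  fixes K :: "'a::field set" and \<zeta> :: "'a \<Rightarrow> real option"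
  assumes subfield: "subfield K" and real_place: "real_place K \<zeta>"
begin

lemma outside: "a \<notin> K \<Longrightarrow> \<zeta> a = None"
  and one: "\<zeta> 1 = Some 1"
  and None_iff: "a \<in> K \<Longrightarrow> \<zeta> a = None \<longleftrightarrow> a \<noteq> 0 \<and> \<zeta> (inverse a) = Some 0"
  using real_place unfolding real_place_def by auto

lemma add: "a \<in> K \<Longrightarrow> b \<in> K \<Longrightarrow> \<zeta> a = Some u \<Longrightarrow> \<zeta> b = Some v \<Longrightarrow> \<zeta> (a + b) = Some (u + v)"
  and mult: "a \<in> K \<Longrightarrow> b \<in> K \<Longrightarrow> \<zeta> a = Some u \<Longrightarrow> \<zeta> b = Some v \<Longrightarrow> \<zeta> (a * b) = Some (u * v)"
  using real_place unfolding real_place_def by force+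

lemma zero: "\<zeta> 0 = Some 0"
proof -
  obtain u where u: "\<zeta> 0 = Some u"
    using None_iff[OF subfield_0[OF subfield]] by auto
  then have "\<zeta> (0 + 0) = Some (u + u)"
    using add subfield_0[OF subfield] by blast
  then show ?thesis
    using u by simp
qed

lemma uminus:
  assumes "a \<in> K" "\<zeta> a = Some u"
  shows "\<zeta> (- a) = Some (- u)"
proof -
  have m: "- 1 \<in> K"
    using subfield subfield_1 subfield_uminus by blast
  then obtain v where v: "\<zeta> (- 1) = Some v"
    using None_iff one by fastforce
  have "\<zeta> (- 1 + 1) = Some (v + 1)"
    using add[OF m _ v one] subfield_1[OF subfield] by blast
  then have "v = - 1"
    using zero by simp
  then show ?thesis
    using mult[OF m assms(1) v assms(2)] by simp
qed

lemma diff: "a \<in> K \<Longrightarrow> b \<in> K \<Longrightarrow> \<zeta> a = Some u \<Longrightarrow> \<zeta> b = Some v \<Longrightarrow> \<zeta> (a - b) = Some (u - v)"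
  using add[of a "- b" u "- v"] uminus[of b v] subfield_uminus[OF subfield] by simp

lemma inverse:
  assumes "a \<in> K" "\<zeta> a = Some u" "u \<noteq> 0"
  shows "\<zeta> (inverse a) = Some (inverse u)"
proof -
  have "a \<noteq> 0"
    using assms zero by auto
  have ia: "inverse a \<in> K"
    using assms subfield_inverse[OF subfield] by blast
  then obtain w where w: "\<zeta> (inverse a) = Some w"
    using None_iff assms by fastforce
  have "\<zeta> (a * inverse a) = Some (u * w)"
    using mult[OF assms(1) ia assms(2) w] .
  then have "u * w = 1"
    using one \<open>a \<noteq> 0\<close> by simp
  then show ?thesis
    using w by (metis inverse_unique)
qed

lemma inverse_None: "a \<in> K \<Longrightarrow> \<zeta> a = None \<Longrightarrow> \<zeta> (inverse a) = Some 0"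
  using None_iff by blast

lemma power: "a \<in> K \<Longrightarrow> \<zeta> a = Some u \<Longrightarrow> \<zeta> (a ^ n) = Some (u ^ n)"
  by (induction n) (simp_all add: one mult subfield_power[OF subfield])

lemma power_inverse_None: "a \<in> K \<Longrightarrow> \<zeta> a = None \<Longrightarrow> \<zeta> (inverse a ^ n) = Some (0 ^ n)"
  using power[OF subfield_inverse[OF subfield] inverse_None] .

lemma of_nat: "\<zeta> (of_nat n) = Some (of_nat n)"
  by (induction n) (simp_all add: zero add one subfield_of_nat[OF subfield] subfield_1[OF subfield])

lemma of_int: "\<zeta> (of_int i) = Some (of_int i)"
  by (cases i rule: int_cases2) (simp_all add: of_nat uminus subfield_of_nat[OF subfield])

lemma divide:
  assumes "a \<in> K" "c \<in> K" "c \<noteq> 0" "\<zeta> a = Some u" "\<zeta> c = Some w" "u \<noteq> 0 \<or> w \<noteq> 0"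
  shows "\<zeta> (a / c) = (if w = 0 then None else Some (u / w))"
proof (cases "w = 0")
  case False
  then show ?thesis
    using mult[OF assms(1) subfield_inverse[OF subfield assms(2)] assms(4) inverse[OF assms(2,5)]]
    by (simp add: divide_inverse)
next
  case True
  then have "u \<noteq> 0" "a \<noteq> 0"
    using assms(4,6) zero by auto
  have "\<zeta> (c * inverse a) = Some (w * inverse u)"
    using mult[OF assms(2) subfield_inverse[OF subfield assms(1)] assms(5) inverse[OF assms(1,4)]]
      \<open>u \<noteq> 0\<close> .
  then have "\<zeta> (inverse (a / c)) = Some 0"
    using True by (simp add: divide_inverse mult.commute)
  then show ?thesis
    using None_iff[of "a / c"] subfield_divide[OF subfield assms(1,2)] True \<open>a \<noteq> 0\<close> assms(3) by simp
qed

lemma real_place_restrict: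
  assumes "subfield L" "L \<subseteq> K"
  shows "real_place L (place_restrict L \<zeta>)"
proof -
  note L = subfield_1[OF assms(1)] subfield_add[OF assms(1)] subfield_mult[OF assms(1)]
    subfield_inverse[OF assms(1)]
  show ?thesis
    unfolding real_place_def place_restrict_def
    using one None_iff add mult assms(2) L by (auto simp: subset_iff)
qed

end

lemma place_iff_mem_places: "subfield K \<Longrightarrow> place K \<zeta> \<longleftrightarrow> \<zeta> \<in> places K"
  unfolding places_def place_def by simp

section \<open>Places of an archimedean Euclidean field are trivial\<close>

lemma subfield_Rats:
  fixes K :: "'a::field_char_0 set"
  assumes "subfield K" "r \<in> \<rat>"
  shows "r \<in> K"
  using assms(2) by (rule Rats_cases') (simp add: subfield_divide subfield_of_int assms(1))

lemma place_Rats: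
  fixes S :: "real set"
  assumes "place S \<zeta>" "r \<in> \<rat>"
  shows "\<zeta> r = Some r"
proof -
  interpret place S \<zeta> by fact
  obtain a b where "b > 0" "r = of_int a / of_int b"
    using Rats_cases'[OF assms(2)] by metis
  moreover have "\<zeta> (inverse (of_int b)) = Some (inverse (of_int b))"
    using inverse[OF subfield_of_int[OF subfield] of_int] \<open>b > 0\<close> by simp
  ultimately show ?thesis
    using mult[OF subfield_of_int[OF subfield] subfield_inverse[OF subfield subfield_of_int[OF subfield]]
        of_int] by (simp add: divide_inverse)
qed

context
  fixes S :: "real set" and \<zeta> :: "real \<Rightarrow> real option"
  assumes P: "place S \<zeta>" and sqrt: "\<forall>a\<in>S. 0 < a \<longrightarrow> (\<exists>b\<in>S. b * b = a)"
begin

interpretation place S \<zeta>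
  by (rule P)

lemma place_Euclidean_subfield_mono:
  assumes "c \<in> S" "d \<in> S" "c < d" "\<zeta> c = Some u" "\<zeta> d = Some v"
  shows "u \<le> v"
proof -
  have nonneg: "0 \<le> v" if c: "c \<in> S" "0 < c" "\<zeta> c = Some v" for c v
  proof -
    obtain b where b: "b \<in> S" "b * b = c"
      using sqrt c by blast
    show ?thesis
    proof (cases "\<zeta> b")
      case (Some w)
      then show ?thesis
        using mult[OF b(1) b(1) Some Some] b(2) c(3) by simp
    next
      case None
      have "\<zeta> (inverse b * inverse b) = Some (0 * 0)"
        using mult inverse_None[OF b(1) None] subfield_inverse[OF subfield b(1)] by blast
      then have "\<zeta> (inverse c) = Some 0"
        using b(2) by (metis inverse_mult_distrib mult_zero_left)
      then show ?thesis
        using None_iff[OF c(1)] c by simp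
    qed
  qed
  show ?thesis
    using nonneg[OF subfield_diff[OF subfield assms(2,1)] _ diff[OF assms(2,1,5,4)]] assms(3) by simp
qed

lemma place_Euclidean_subfield_finite:
  assumes "c \<in> S"
  shows "\<zeta> c \<noteq> None"
proof
  assume "\<zeta> c = None"
  then have "c \<noteq> 0" and inv: "\<zeta> (inverse c) = Some 0"
    using None_iff[OF assms] by auto
  define d where "d = \<bar>inverse c\<bar>"
  have d: "d \<in> S" "\<zeta> d = Some 0"
    using inv uminus[OF _ inv] subfield_inverse[OF subfield assms] subfield_uminus[OF subfield]
    by (simp_all add: d_def abs_if)
  have "0 < d"
    using \<open>c \<noteq> 0\<close> by (simp add: d_def)
  then obtain n :: nat where "0 < n" and n: "inverse (real n) < d"
    using ex_inverse_of_nat_less by blast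
  have q: "inverse (real n) \<in> \<rat>"
    by simp
  have "inverse (real n) \<le> 0"
    using place_Euclidean_subfield_mono[OF subfield_Rats[OF subfield q] d(1) n place_Rats[OF P q] d(2)] .
  with \<open>0 < n\<close> show False
    by simp
qed

lemma place_Euclidean_subfield_id:
  assumes "c \<in> S"
  shows "\<zeta> c = Some c"
proof -
  obtain v where v: "\<zeta> c = Some v"
    using place_Euclidean_subfield_finite[OF assms] by blast
  note mono = place_Euclidean_subfield_mono and Rats = subfield_Rats[OF subfield] place_Rats[OF P]
  have below: "r \<le> v" if "r \<in> \<rat>" "r < c" for r
    using mono[OF Rats(1)[OF that(1)] assms that(2) Rats(2)[OF that(1)] v] .
  have above: "v \<le> r" if "r \<in> \<rat>" "c < r" for r
    using mono[OF assms Rats(1)[OF that(1)] that(2) v Rats(2)[OF that(1)]] .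
  have "v = c"
  proof (rule ccontr)
    assume "v \<noteq> c"
    then consider "v < c" | "c < v" by linarith
    then show False
    proof cases
      case 1
      then obtain r where "r \<in> \<rat>" "v < r" "r < c"
        using Rats_dense_in_real by blast
      then show False
        using below[of r] by simp
    next
      case 2
      then obtain r where "r \<in> \<rat>" "c < r" "r < v"
        using Rats_dense_in_real by blast
      then show False
        using above[of r] by simp
    qed
  qed
  then show ?thesis
    using v by simp
qed

end

lemma place_const_fract:
  assumes S: "subfield S" and "place (ratfun_field S) \<zeta>"
  shows "place S (place_restrict S (\<zeta> \<circ> const_fract))"
proof -
  interpret place "ratfun_field S" \<zeta> by fact
  note c = const_fract_in_ratfun_field[OF S]
  have "real_place S (place_restrict S (\<zeta> \<circ> const_fract))"
    unfolding real_place_def place_restrict_def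
    using one None_iff add mult c subfield_1[OF S] subfield_add[OF S] subfield_mult[OF S]
      subfield_inverse[OF S]
    by (simp add: const_fract_1 const_fract_add const_fract_mult const_fract_inverse
        const_fract_eq_0_iff)
  then show ?thesis
    using S by (simp add: place_def)
qed

lemma real_closed_subfield_imp_subfield: "real_closed_subfield S \<Longrightarrow> subfield S"
  by (simp add: real_closed_subfield_def real_subfield_eq_subfield)

lemma ratfun_place_fixes_constants:
  assumes RC: "real_closed_subfield S" and "\<zeta> \<in> places (ratfun_field S)" "c \<in> S"
  shows "\<zeta> (const_fract c) = Some c"
proof -
  have S: "subfield S"
    using RC by (rule real_closed_subfield_imp_subfield)
  then have "place (ratfun_field S) \<zeta>"
    using assms(2) subfield_ratfun_field place_iff_mem_places by blast
  from place_Euclidean_subfield_id[OF place_const_fract[OF S this]] RC \<open>c \<in> S\<close>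
  show ?thesis
    by (simp add: real_closed_subfield_def place_restrict_def)
qed

section \<open>The places of \<open>\<real>(y)\<close> at the points of the projective line\<close>

lemma Fract_rep_nonvanishing:
  "\<exists>p q. b = Fract p q \<and> q \<noteq> 0 \<and> (poly p a \<noteq> 0 \<or> poly q a \<noteq> 0)"
proof -
  obtain p q where b: "b = Fract p q" "q \<noteq> 0"
    by (cases b) auto
  show ?thesis
  proof (cases "p = 0")
    case True
    then show ?thesis
      using b by (intro exI[of _ 0] exI[of _ 1]) (simp add: eq_fract)
  next
    case False
    define X where "X = [:- a, 1:]"
    obtain p' where p': "p = X ^ order a p * p'" "\<not> X dvd p'"
      using order_decomp[OF False] X_def by blast
    obtain q' where q': "q = X ^ order a q * q'" "\<not> X dvd q'"
      using order_decomp[OF b(2)] X_def by blast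
    have "poly p' a \<noteq> 0" "poly q' a \<noteq> 0"
      using p'(2) q'(2) by (auto simp: poly_eq_0_iff_dvd X_def)
    then have "q' \<noteq> 0"
      by auto
    have "X \<noteq> 0"
      by (simp add: X_def)
    \<comment> \<open>cancel the common power of the linear factor at a\<close>
    show ?thesis
    proof (cases "order a q \<le> order a p")
      case True
      then have "p * q' = (X ^ (order a p - order a q) * p') * q"
        by (subst p'(1), subst q'(1)) (simp add: algebra_simps flip: power_add)
      then have "b = Fract (X ^ (order a p - order a q) * p') q'"
        using b \<open>q' \<noteq> 0\<close> by (simp add: eq_fract)
      then show ?thesis
        using \<open>poly q' a \<noteq> 0\<close> \<open>q' \<noteq> 0\<close> by blast
    next
      case False
      then have "p * (X ^ (order a q - order a p) * q') = p' * q"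
        by (subst p'(1), subst q'(1)) (simp add: algebra_simps flip: power_add)
      then have "b = Fract p' (X ^ (order a q - order a p) * q')"
        using b \<open>q' \<noteq> 0\<close> \<open>X \<noteq> 0\<close> by (simp add: eq_fract)
      moreover have "X ^ (order a q - order a p) * q' \<noteq> 0"
        using \<open>X \<noteq> 0\<close> \<open>q' \<noteq> 0\<close> by simp
      ultimately show ?thesis
        using \<open>poly p' a \<noteq> 0\<close> by blast
    qed
  qed
qed

definition eval_place :: "real \<Rightarrow> real poly fract \<Rightarrow> real option" where
  "eval_place a b =
     (if \<exists>p q. b = Fract p q \<and> poly q a \<noteq> 0
      then Some (THE v. \<exists>p q. b = Fract p q \<and> poly q a \<noteq> 0 \<and> v = poly p a / poly q a)
      else None)"

lemma eval_place_Fract: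
  assumes "poly q a \<noteq> 0"
  shows "eval_place a (Fract p q) = Some (poly p a / poly q a)"
proof -
  have "v = poly p a / poly q a"
    if "Fract p q = Fract p' q'" "poly q' a \<noteq> 0" "v = poly p' a / poly q' a" for p' q' v
  proof -
    have "q \<noteq> 0" "q' \<noteq> 0"
      using that(2) assms by auto
    then have "p * q' = p' * q"
      using that(1) by (simp add: eq_fract)
    then have "poly p a * poly q' a = poly p' a * poly q a"
      by (metis poly_mult)
    then show ?thesis
      using that(2,3) assms by (auto simp: frac_eq_eq algebra_simps)
  qed
  then have "(THE v. \<exists>p' q'. Fract p q = Fract p' q' \<and> poly q' a \<noteq> 0 \<and> v = poly p' a / poly q' a)
      = poly p a / poly q a"
    using assms by (intro the_equality) blast+
  then show ?thesis
    unfolding eval_place_def using assms by auto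
qed

lemma eval_place_to_fract: "eval_place a (to_fract p) = Some (poly p a)"
  using eval_place_Fract[of 1 a p] by simp

lemma eval_place_reduced:
  assumes "b = Fract p q" "q \<noteq> 0" "poly p a \<noteq> 0 \<or> poly q a \<noteq> 0"
  shows "eval_place a b = (if poly q a = 0 then None else Some (poly p a / poly q a))"
proof (cases "poly q a = 0")
  case True
  have "poly s a = 0" if "b = Fract r s" for r s
  proof -
    have "s = 0 \<or> p * s = r * q"
      using that assms(1,2) by (cases "s = 0") (auto simp: eq_fract)
    then have "poly p a * poly s a = 0"
      using True by (metis mult_zero_left mult_zero_right poly_0 poly_mult)
    then show ?thesis
      using True assms(3) by simp
  qed
  then show ?thesis
    using True by (auto simp: eval_place_def)
qed (simp add: assms eval_place_Fract)

lemma eval_place_SomeE: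
  assumes "eval_place a b = Some u"
  obtains p q where "b = Fract p q" "poly q a \<noteq> 0" "u = poly p a / poly q a"
  by (metis Fract_rep_nonvanishing[of b a] eval_place_reduced assms option.distinct(1) option.inject)

lemma eval_place_None_iff:
  "eval_place a b = None \<longleftrightarrow> b \<noteq> 0 \<and> eval_place a (inverse b) = Some 0"
proof -
  obtain p q where pq: "b = Fract p q" "q \<noteq> 0" "poly p a \<noteq> 0 \<or> poly q a \<noteq> 0"
    using Fract_rep_nonvanishing by blast
  show ?thesis
  proof (cases "p = 0")
    case True
    then show ?thesis
      using pq by (simp add: eval_place_reduced Fract_eq_0_iff)
  next
    case False
    then have "b \<noteq> 0" "inverse b = Fract q p"
      using pq by (simp_all add: Fract_eq_0_iff)
    then show ?thesis
      using pq False by (auto simp: eval_place_reduced)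
  qed
qed

lemma eval_place_add_mult:
  assumes "eval_place a b = Some u" "eval_place a c = Some v"
  shows "eval_place a (b + c) = Some (u + v)" "eval_place a (b * c) = Some (u * v)"
proof -
  obtain p q where b: "b = Fract p q" "poly q a \<noteq> 0" "u = poly p a / poly q a"
    using assms(1) by (rule eval_place_SomeE)
  obtain r s where c: "c = Fract r s" "poly s a \<noteq> 0" "v = poly r a / poly s a"
    using assms(2) by (rule eval_place_SomeE)
  have "q \<noteq> 0" "s \<noteq> 0"
    using b c by auto
  then have "b + c = Fract (p * s + r * q) (q * s)" "b * c = Fract (p * r) (q * s)"
    using b c by simp_all
  then show "eval_place a (b + c) = Some (u + v)" "eval_place a (b * c) = Some (u * v)"
    using b(2) c(2) unfolding b(3) c(3) by (simp_all add: eval_place_Fract field_simps)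
qed

lemma real_place_eval_place: "real_place UNIV (eval_place a)"
  unfolding real_place_def
  using eval_place_Fract[of 1 a 1] eval_place_None_iff eval_place_add_mult
  by (auto simp: One_fract_def)

lemma coeff_mult_degree_bound:
  assumes "degree p \<le> m" "degree q \<le> n"
  shows "coeff (p * q) (m + n) = coeff p m * coeff q n"
proof -
  have "coeff (p * q) (m + n) = (\<Sum>i\<le>m + n. coeff p i * coeff q (m + n - i))"
    by (rule coeff_mult)
  also have "\<dots> = (\<Sum>i\<in>{m}. coeff p i * coeff q (m + n - i))"
  proof (rule sum.mono_neutral_right)
    show "\<forall>i\<in>{..m + n} - {m}. coeff p i * coeff q (m + n - i) = 0"
    proof
      fix i assume "i \<in> {..m + n} - {m}"
      then have "degree p < i \<or> degree q < m + n - i"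
        using assms by auto
      then show "coeff p i * coeff q (m + n - i) = 0"
        by (auto simp: coeff_eq_0)
    qed
  qed auto
  finally show ?thesis
    by simp
qed

definition infty_place :: "real poly fract \<Rightarrow> real option" where
  "infty_place b =
     (if \<exists>p q. b = Fract p q \<and> q \<noteq> 0 \<and> degree p \<le> degree q
      then Some (THE v. \<exists>p q. b = Fract p q \<and> q \<noteq> 0 \<and> degree p \<le> degree q \<and>
                          v = coeff p (degree q) / lead_coeff q)
      else None)"

lemma infty_place_Fract:
  assumes "q \<noteq> 0"
  shows "infty_place (Fract p q) =
    (if degree p \<le> degree q then Some (coeff p (degree q) / lead_coeff q) else None)"
proof (cases "degree p \<le> degree q")
  case True
  have "v = coeff p (degree q) / lead_coeff q"
    if "Fract p q = Fract p' q'" "q' \<noteq> 0" "degree p' \<le> degree q'"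
      "v = coeff p' (degree q') / lead_coeff q'" for p' q' v
  proof -
    have "p * q' = p' * q"
      using that(1,2) assms by (simp add: eq_fract)
    then have "coeff p (degree q) * lead_coeff q' = coeff p' (degree q') * lead_coeff q"
      using coeff_mult_degree_bound[OF True, of q' "degree q'"]
        coeff_mult_degree_bound[OF that(3), of q "degree q"] by (simp add: add.commute)
    then show ?thesis
      using that(2,4) assms by (simp add: frac_eq_eq)
  qed
  then have "(THE v. \<exists>p' q'. Fract p q = Fract p' q' \<and> q' \<noteq> 0 \<and> degree p' \<le> degree q' \<and>
                 v = coeff p' (degree q') / lead_coeff q') = coeff p (degree q) / lead_coeff q"
    using assms True by (intro the_equality) blast+
  then show ?thesis
    unfolding infty_place_def using assms True by auto
next
  case False
  have "\<not> degree r \<le> degree s" if "Fract p q = Fract r s" "s \<noteq> 0" for r s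
  proof -
    have "p \<noteq> 0"
      using False by auto
    have "p * s = r * q"
      using that assms by (simp add: eq_fract)
    moreover from this have "r \<noteq> 0"
      using \<open>p \<noteq> 0\<close> that(2) by auto
    ultimately have "degree p + degree s = degree r + degree q"
      using \<open>p \<noteq> 0\<close> assms that(2) by (metis degree_mult_eq)
    then show ?thesis
      using False by linarith
  qed
  then show ?thesis
    unfolding infty_place_def using False by auto
qed

lemma infty_place_to_fract: "infty_place (to_fract p) = (if degree p = 0 then Some (coeff p 0) else None)"
  by (simp add: infty_place_Fract)

lemma infty_place_None_iff: "infty_place b = None \<longleftrightarrow> b \<noteq> 0 \<and> infty_place (inverse b) = Some 0"
proof -
  obtain p q where b: "b = Fract p q" "q \<noteq> 0"
    by (cases b) auto
  show ?thesis
  proof (cases "p = 0")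
    case True
    then show ?thesis
      using b by (simp add: infty_place_Fract Fract_eq_0_iff)
  next
    case False
    then have "b \<noteq> 0" and inv: "inverse b = Fract q p"
      using b by (simp_all add: Fract_eq_0_iff)
    consider "degree q < degree p" | "degree q = degree p" | "degree p < degree q"
      by linarith
    then show ?thesis
    proof cases
      case 1
      then show ?thesis
        using b \<open>b \<noteq> 0\<close> False by (simp add: inv infty_place_Fract coeff_eq_0)
    next
      case 2
      then have "coeff q (degree p) \<noteq> 0" "coeff p (degree q) \<noteq> 0"
        using b(2) False by (metis leading_coeff_0_iff)+
      then show ?thesis
        using 2 b False by (simp add: inv infty_place_Fract)
    next
      case 3
      then show ?thesis
        using b False by (simp add: inv infty_place_Fract)
    qed
  qed
qed

lemma infty_place_add_mult:
  assumes "infty_place b = Some u" "infty_place c = Some v"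
  shows "infty_place (b + c) = Some (u + v)" "infty_place (b * c) = Some (u * v)"
proof -
  obtain p q where b: "b = Fract p q" "q \<noteq> 0"
    by (cases b) auto
  obtain r s where c: "c = Fract r s" "s \<noteq> 0"
    by (cases c) auto
  have deg: "degree p \<le> degree q" "degree r \<le> degree s"
    and uv: "u = coeff p (degree q) / lead_coeff q" "v = coeff r (degree s) / lead_coeff s"
    using assms b c by (simp_all add: infty_place_Fract split: if_splits)
  define n where "n = degree q + degree s"
  have qs: "q * s \<noteq> 0" "degree (q * s) = n" "coeff (q * s) n = lead_coeff q * lead_coeff s"
    using b(2) c(2) by (simp_all add: n_def degree_mult_eq coeff_mult_degree_sum)
  have "degree (p * s) \<le> n" "degree (r * q) \<le> n" "degree (p * r) \<le> n"
    using deg degree_mult_le[of p s] degree_mult_le[of r q] degree_mult_le[of p r]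
    by (simp_all add: n_def)
  then have "degree (p * s + r * q) \<le> n" "degree (p * r) \<le> n"
    by (simp_all add: degree_add_le)
  moreover have "coeff (p * s + r * q) n = coeff p (degree q) * lead_coeff s + coeff r (degree s) * lead_coeff q"
    "coeff (p * r) n = coeff p (degree q) * coeff r (degree s)"
    using coeff_mult_degree_bound[OF deg(1), of s "degree s"] coeff_mult_degree_bound[OF deg(2), of q "degree q"]
      coeff_mult_degree_bound[OF deg] by (simp_all add: n_def add.commute)
  moreover have "b + c = Fract (p * s + r * q) (q * s)" "b * c = Fract (p * r) (q * s)"
    using b c by simp_all
  ultimately show "infty_place (b + c) = Some (u + v)" "infty_place (b * c) = Some (u * v)"
    using qs b(2) c(2) unfolding uv by (simp_all add: infty_place_Fract field_simps)
qed

lemma real_place_infty_place: "real_place UNIV infty_place"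
  unfolding real_place_def
  using infty_place_Fract[of 1 1] infty_place_None_iff infty_place_add_mult
  by (auto simp: One_fract_def)

definition point_place :: "real option \<Rightarrow> real poly fract \<Rightarrow> real option" where
  "point_place w = (case w of None \<Rightarrow> infty_place | Some a \<Rightarrow> eval_place a)"

lemma place_point_place: "place UNIV (point_place w)"
  by (cases w) (simp_all add: place_def subfield_def point_place_def real_place_eval_place
      real_place_infty_place)

lemma point_place_var_y: "point_place w var_y = w"
  by (cases w) (simp_all add: point_place_def var_y_def eval_place_to_fract infty_place_to_fract)

lemma point_place_const_fract: "point_place w (const_fract c) = Some c"
  by (cases w) (simp_all add: point_place_def const_fract_def eval_place_to_fract infty_place_to_fract)

section \<open>A place of S(y) fixing S is determined by its value at y\<close>

lemma pCons_eq_const_plus_X_mult: "pCons c p = [:c:] + [:0, 1:] * (p :: 'a::comm_ring_1 poly)"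
  by (simp add: mult_pCons_left)

lemma Fract_power: "Fract p q ^ n = Fract (p ^ n) (q ^ n)"
  by (induction n) (simp_all add: One_fract_def)

lemma Fract_eq_leading_terms:
  assumes "q \<noteq> 0" "degree p \<le> degree q"
  shows "Fract p q = Fract p ([:0, 1:] ^ degree p) * inverse (Fract q ([:0, 1:] ^ degree q))
    * inverse var_y ^ (degree q - degree p)"
proof -
  define X :: "real poly" where "X = [:0, 1:]"
  have "X \<noteq> 0"
    by (simp add: X_def)
  have "X ^ degree q = X ^ degree p * X ^ (degree q - degree p)"
    using assms(2) by (simp flip: power_add)
  then show ?thesis
    using \<open>X \<noteq> 0\<close> assms(1)
    by (simp add: var_y_def Fract_power eq_fract algebra_simps flip: X_def)
qed

context
  fixes S :: "real set" and \<xi> :: "real poly fract \<Rightarrow> real option"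
  assumes S: "subfield S" and P: "place (ratfun_field S) \<xi>"
    and fixes_S: "\<forall>c\<in>S. \<xi> (const_fract c) = Some c"
begin

interpretation place "ratfun_field S" \<xi>
  by (rule P)

lemma place_to_fract_eq_poly:
  assumes "\<xi> var_y = Some a" "poly_over S p"
  shows "\<xi> (to_fract p) = Some (poly p a)"
  using assms(2)
proof (induction p)
  case 0
  then show ?case
    using zero by (simp add: Zero_fract_def)
next
  case (pCons c p)
  then have "c \<in> S" "poly_over S p"
    by (simp_all add: poly_over_pCons_iff[OF S])
  have "to_fract (pCons c p) = const_fract c + var_y * to_fract p"
    unfolding const_fract_def var_y_def by (subst pCons_eq_const_plus_X_mult) simp
  moreover have "\<xi> (var_y * to_fract p) = Some (a * poly p a)"
    using mult[OF var_y_in_ratfun_field[OF S] to_fract_in_ratfun_field[OF S \<open>poly_over S p\<close>]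
        assms(1) pCons.IH[OF \<open>poly_over S p\<close>]] .
  ultimately show ?case
    using add[OF const_fract_in_ratfun_field[OF S \<open>c \<in> S\<close>] _ fixes_S[rule_format, OF \<open>c \<in> S\<close>]]
      subfield_mult[OF subfield var_y_in_ratfun_field[OF S] to_fract_in_ratfun_field[OF S \<open>poly_over S p\<close>]]
    by simp
qed

context
  assumes infinite: "\<xi> var_y = None"
begin

lemma place_inverse_var_y_power: "\<xi> (inverse var_y ^ n) = Some (0 ^ n)"
  using power_inverse_None[OF var_y_in_ratfun_field[OF S] infinite] .

lemma place_Fract_X_power_eq_coeff:
  assumes "poly_over S p" "degree p \<le> n"
  shows "\<xi> (Fract p ([:0, 1:] ^ n)) = Some (coeff p n)"
  using assms
proof (induction n arbitrary: p)
  case 0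
  then obtain c where "p = [:c:]"
    by (metis degree_eq_zeroE le_zero_eq)
  then show ?case
    using 0 fixes_S by (simp add: const_fract_def poly_over_pCons_iff[OF S])
next
  case (Suc n)
  obtain c p' where p: "p = pCons c p'"
    by (cases p) auto
  then have "c \<in> S" "poly_over S p'" "degree p' \<le> n"
    using Suc.prems by (auto simp: poly_over_pCons_iff[OF S] split: if_splits)
  define X :: "real poly" where "X = [:0, 1:]"
  have "X \<noteq> 0"
    by (simp add: X_def)
  have pc: "p = [:c:] + X * p'"
    unfolding p X_def by (rule pCons_eq_const_plus_X_mult)
  have "const_fract c * inverse var_y ^ Suc n + Fract p' (X ^ n)
      = Fract ([:c:] * X ^ n + p' * X ^ Suc n) (X ^ Suc n * X ^ n)"
    using \<open>X \<noteq> 0\<close> by (simp add: const_fract_def var_y_def X_def[symmetric] Fract_power)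
  also have "\<dots> = Fract p (X ^ Suc n)"
    using \<open>X \<noteq> 0\<close> by (simp add: eq_fract pc algebra_simps)
  finally have decomp: "Fract p (X ^ Suc n) = const_fract c * inverse var_y ^ Suc n + Fract p' (X ^ n)" ..
  have "\<xi> (const_fract c * inverse var_y ^ Suc n) = Some 0"
    using mult[OF const_fract_in_ratfun_field[OF S \<open>c \<in> S\<close>] inverse_var_y_power_in_ratfun_field[OF S, of "Suc n"]
        fixes_S[rule_format, OF \<open>c \<in> S\<close>] place_inverse_var_y_power[of "Suc n"]] by simp
  moreover have "Fract p' (X ^ n) \<in> ratfun_field S"
    using \<open>poly_over S p'\<close> \<open>X \<noteq> 0\<close>
    by (intro ratfun_field_Fract poly_over_power[OF S]) (simp_all add: X_def poly_over_X[OF S])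
  ultimately have "\<xi> (Fract p (X ^ Suc n)) = Some (0 + coeff p' n)"
    unfolding decomp using Suc.IH[OF \<open>poly_over S p'\<close> \<open>degree p' \<le> n\<close>]
      subfield_mult[OF subfield const_fract_in_ratfun_field[OF S \<open>c \<in> S\<close>] inverse_var_y_power_in_ratfun_field[OF S, of "Suc n"]]
    by (intro add) (simp_all add: X_def)
  then show ?case
    by (simp add: p X_def)
qed

lemma place_Fract_degree_le:
  assumes pq: "poly_over S p" "poly_over S q" "p \<noteq> 0" "q \<noteq> 0" "degree p \<le> degree q"
  shows "\<xi> (Fract p q) = Some (lead_coeff p / lead_coeff q * 0 ^ (degree q - degree p))"
proof -
  define A where "A = Fract p ([:0, 1:] ^ degree p)"
  define B where "B = Fract q ([:0, 1:] ^ degree q)"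
  have A: "A \<in> ratfun_field S" "\<xi> A = Some (lead_coeff p)"
    and B: "B \<in> ratfun_field S" "\<xi> B = Some (lead_coeff q)"
    using pq place_Fract_X_power_eq_coeff[of p "degree p"] place_Fract_X_power_eq_coeff[of q "degree q"]
    by (simp_all add: A_def B_def ratfun_field_Fract poly_over_power[OF S] poly_over_X[OF S])
  have "inverse B \<in> ratfun_field S" "\<xi> (inverse B) = Some (inverse (lead_coeff q))"
    using subfield_inverse[OF subfield B(1)] inverse[OF B] pq(4) by simp_all
  then have "\<xi> (A * inverse B) = Some (lead_coeff p * inverse (lead_coeff q))"
    using mult[OF A(1)] A(2) by blast
  then have "\<xi> (A * inverse B * inverse var_y ^ (degree q - degree p))
      = Some (lead_coeff p * inverse (lead_coeff q) * 0 ^ (degree q - degree p))"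
    using mult[OF _ inverse_var_y_power_in_ratfun_field[OF S] _ place_inverse_var_y_power]
      subfield_mult[OF subfield A(1) \<open>inverse B \<in> ratfun_field S\<close>] by blast
  then show ?thesis
    unfolding A_def B_def Fract_eq_leading_terms[OF pq(4,5), symmetric] by (simp add: divide_inverse)
qed

lemma place_Fract_eq_infty_place:
  assumes pq: "poly_over S p" "poly_over S q" "q \<noteq> 0"
  shows "\<xi> (Fract p q) = infty_place (Fract p q)"
proof (cases "p = 0")
  case True
  then show ?thesis
    using zero infty_place_Fract[OF pq(3), of 0] by (simp add: fract_collapse)
next
  case False
  show ?thesis
  proof (cases "degree p \<le> degree q")
    case True
    then have "lead_coeff p / lead_coeff q * 0 ^ (degree q - degree p) = coeff p (degree q) / lead_coeff q"
      by (cases "degree p = degree q") (simp_all add: coeff_eq_0)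
    then show ?thesis
      using place_Fract_degree_le[OF pq(1,2) False pq(3) True] True pq(3) by (simp add: infty_place_Fract)
  next
    case less: False
    then have "\<xi> (inverse (Fract p q)) = Some 0"
      using place_Fract_degree_le[OF pq(2,1) pq(3) False] by simp
    moreover have "Fract p q \<noteq> 0"
      using False pq(3) by (simp add: Fract_eq_0_iff)
    ultimately show ?thesis
      using None_iff[OF ratfun_field_Fract[OF pq]] less pq(3) by (simp add: infty_place_Fract)
  qed
qed

end

end

lemma ratfun_places_eqI:
  assumes S: "subfield S" and "place (ratfun_field S) \<xi>\<^sub>1" "place (ratfun_field S) \<xi>\<^sub>2"
    and agree: "\<And>p. poly_over S p \<Longrightarrow> \<xi>\<^sub>1 (to_fract p) = \<xi>\<^sub>2 (to_fract p) \<and> \<xi>\<^sub>1 (to_fract p) \<noteq> None"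
  shows "\<xi>\<^sub>1 = \<xi>\<^sub>2"
proof
  interpret \<xi>\<^sub>1: place "ratfun_field S" \<xi>\<^sub>1 by fact
  interpret \<xi>\<^sub>2: place "ratfun_field S" \<xi>\<^sub>2 by fact
  fix b
  show "\<xi>\<^sub>1 b = \<xi>\<^sub>2 b"
  proof (cases "b \<in> ratfun_field S")
    case False
    then show ?thesis
      using \<xi>\<^sub>1.outside \<xi>\<^sub>2.outside by simp
  next
    case True
    then obtain p q where "poly_over S p" "poly_over S q" "q \<noteq> 0" "b = Fract p q"
      by (rule ratfun_fieldE)
    then obtain s t f g where st: "poly_over S s" "poly_over S t" "t \<noteq> 0" "poly_over S f"
      "poly_over S g" "b = Fract s t" "f * s + g * t = 1"
      using poly_over_Fract_coprime[OF S] by metis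
    note in_K = to_fract_in_ratfun_field[OF S]
    obtain u w f' g' where uw: "\<xi>\<^sub>1 (to_fract s) = Some u" "\<xi>\<^sub>2 (to_fract s) = Some u"
      "\<xi>\<^sub>1 (to_fract t) = Some w" "\<xi>\<^sub>2 (to_fract t) = Some w"
      and f': "\<xi>\<^sub>1 (to_fract f) = Some f'" and g': "\<xi>\<^sub>1 (to_fract g) = Some g'"
      using agree st(1,2,4,5) by fastforce
    \<comment> \<open>the Bezout identity forbids a common zero of numerator and denominator\<close>
    have "\<xi>\<^sub>1 (to_fract f * to_fract s + to_fract g * to_fract t) = Some (f' * u + g' * w)"
      using \<xi>\<^sub>1.add[OF subfield_mult[OF \<xi>\<^sub>1.subfield in_K[OF st(4)] in_K[OF st(1)]]
          subfield_mult[OF \<xi>\<^sub>1.subfield in_K[OF st(5)] in_K[OF st(2)]]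
          \<xi>\<^sub>1.mult[OF in_K[OF st(4)] in_K[OF st(1)] f' uw(1)]
          \<xi>\<^sub>1.mult[OF in_K[OF st(5)] in_K[OF st(2)] g' uw(3)]] .
    moreover have "to_fract f * to_fract s + to_fract g * to_fract t = 1"
      using st(7) by (simp add: One_fract_def)
    ultimately have "u \<noteq> 0 \<or> w \<noteq> 0"
      using \<xi>\<^sub>1.one by auto
    moreover have "b = to_fract s / to_fract t" "to_fract t \<noteq> 0"
      using st(3,6) by (simp_all add: Fract_eq_0_iff)
    ultimately show ?thesis
      using \<xi>\<^sub>1.divide[OF in_K in_K] \<xi>\<^sub>2.divide[OF in_K in_K] uw st(1,2) by simp
  qed
qed

lemma place_restrict_point_place:
  "subfield S \<Longrightarrow> place_restrict (ratfun_field S) (point_place w) \<in> places (ratfun_field S)"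
  using place.real_place_restrict[OF place_point_place subfield_ratfun_field]
  by (simp add: places_def)

lemma ratfun_place_eq_point_place:
  assumes S: "subfield S" and "\<xi> \<in> places (ratfun_field S)"
    and fixes_S: "\<forall>c\<in>S. \<xi> (const_fract c) = Some c"
  shows "\<xi> = place_restrict (ratfun_field S) (point_place (\<xi> var_y))"
proof -
  have P: "place (ratfun_field S) \<xi>"
    using assms(2) place_iff_mem_places subfield_ratfun_field[OF S] by blast
  show ?thesis
  proof (cases "\<xi> var_y")
    case None
    show ?thesis
    proof
      fix b
      show "\<xi> b = place_restrict (ratfun_field S) (point_place (\<xi> var_y)) b"
      proof (cases "b \<in> ratfun_field S")
        case True
        then obtain p q where "poly_over S p" "poly_over S q" "q \<noteq> 0" "b = Fract p q"
          by (rule ratfun_fieldE)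
        then show ?thesis
          using place_Fract_eq_infty_place[OF S P fixes_S None] True None
          by (simp add: place_restrict_def point_place_def)
      qed (simp add: place.outside[OF P] place_restrict_def)
    qed
  next
    case (Some a)
    show ?thesis
    proof (rule ratfun_places_eqI[OF S P])
      show "place (ratfun_field S) (place_restrict (ratfun_field S) (point_place (\<xi> var_y)))"
        using place_restrict_point_place[OF S] place_iff_mem_places subfield_ratfun_field[OF S] by blast
      fix p assume "poly_over S p"
      then show "\<xi> (to_fract p) = place_restrict (ratfun_field S) (point_place (\<xi> var_y)) (to_fract p)
          \<and> \<xi> (to_fract p) \<noteq> None"
        using place_to_fract_eq_poly[OF S P fixes_S Some] to_fract_in_ratfun_field[OF S] Some
        by (simp add: place_restrict_def point_place_def eval_place_to_fract)
    qed
  qed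
qed

lemma real_closed_ratfun_place_eq_point_place:
  assumes "real_closed_subfield R" and "\<zeta> \<in> places (ratfun_field R)"
  shows "\<zeta> = place_restrict (ratfun_field R) (point_place (\<zeta> var_y))"
  using ratfun_place_eq_point_place ratfun_place_fixes_constants[OF assms] assms
    real_closed_subfield_imp_subfield by blast

lemma real_closed_ratfun_place_apply:
  assumes "real_closed_subfield R" "\<zeta> \<in> places (ratfun_field R)" "a \<in> ratfun_field R"
  shows "\<zeta> a = point_place (\<zeta> var_y) a"
  using fun_cong[OF real_closed_ratfun_place_eq_point_place[OF assms(1,2)], of a] assms(3)
  by (simp add: place_restrict_def)

section \<open>The topology on the space of places\<close>

definition pos_val :: "real option \<Rightarrow> bool" where
  "pos_val x \<longleftrightarrow> x \<noteq> None \<and> the x > 0"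

lemma pos_val_simps [simp]: "pos_val (Some v) \<longleftrightarrow> 0 < v" "\<not> pos_val None"
  by (simp_all add: pos_val_def)

lemma Hsub_eq: "Hsub K b = {\<zeta> \<in> places K. pos_val (\<zeta> b)}"
  unfolding Hsub_def pos_val_def by auto

lemma topspace_places_top [simp]: "topspace (places_top K) = places K"
  unfolding places_top_def by (auto simp: Hsub_def)

lemma openin_places_top_Hsub: "b \<in> K \<Longrightarrow> openin (places_top K) (Hsub K b)"
  unfolding places_top_def by (intro topology_generated_by_Basis) blast

lemma continuous_map_places_topI:
  assumes "\<And>x. x \<in> topspace X \<Longrightarrow> f x \<in> places L"
    and "\<And>b. b \<in> L \<Longrightarrow> openin X {x \<in> topspace X. pos_val (f x b)}"
  shows "continuous_map X (places_top L) f"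
  unfolding places_top_def
proof (rule continuous_on_generated_topo)
  fix U assume "U \<in> insert (places L) {Hsub L b |b. b \<in> L}"
  then consider "U = places L" | b where "b \<in> L" "U = Hsub L b"
    by blast
  then show "openin X (f -` U \<inter> topspace X)"
  proof cases
    case 1
    then have "f -` U \<inter> topspace X = topspace X"
      using assms(1) by blast
    then show ?thesis
      by simp
  next
    case 2
    then have "f -` U \<inter> topspace X = {x \<in> topspace X. pos_val (f x b)}"
      using assms(1) by (auto simp: Hsub_eq)
    then show ?thesis
      using assms(2)[OF \<open>b \<in> L\<close>] by simp
  qed
qed (use assms(1) in blast)

lemma continuous_map_place_restrict:
  assumes L: "subfield L" and K: "subfield K" and "L \<subseteq> K"
  shows "continuous_map (places_top K) (places_top L) (place_restrict L)"
proof (rule continuous_map_places_topI)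
  show "place_restrict L \<xi> \<in> places L" if "\<xi> \<in> topspace (places_top K)" for \<xi>
    using that place.real_place_restrict[OF _ L \<open>L \<subseteq> K\<close>] place_iff_mem_places[OF K]
    by (simp add: places_def)
  fix b assume "b \<in> L"
  then have "{\<xi> \<in> topspace (places_top K). pos_val (place_restrict L \<xi> b)} = Hsub K b"
    by (simp add: Hsub_eq place_restrict_def)
  then show "openin (places_top K) {\<xi> \<in> topspace (places_top K). pos_val (place_restrict L \<xi> b)}"
    using openin_places_top_Hsub \<open>b \<in> L\<close> \<open>L \<subseteq> K\<close> by auto
qed

lemma poly_pos_at_infinity:
  fixes p :: "real poly"
  assumes "even (degree p)" "0 < lead_coeff p"
  shows "\<exists>M. \<forall>t. M < \<bar>t\<bar> \<longrightarrow> 0 < poly p t"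
proof -
  \<comment> \<open>the reflected polynomial is the expansion of p at infinity\<close>
  have "poly (reflect_poly p) \<midarrow>0\<rightarrow> lead_coeff p"
    using poly_reflect_poly_0[of p] by (metis isCont_def poly_isCont)
  then obtain r where "0 < r" and r: "\<forall>s. s \<noteq> 0 \<and> \<bar>0 - s\<bar> < r \<longrightarrow> 0 < poly (reflect_poly p) s"
    using LIM_fun_gt_zero assms(2) by blast
  have "0 < poly p t" if "inverse r < \<bar>t\<bar>" for t
  proof -
    have "t \<noteq> 0"
      using that \<open>0 < r\<close> by auto
    have "\<bar>inverse t\<bar> < r"
      using less_imp_inverse_less[OF that] \<open>0 < r\<close> by (simp add: abs_inverse)
    then have "0 < inverse t ^ degree p * poly p t"
      using r[rule_format, of "inverse t"] \<open>t \<noteq> 0\<close> \<open>\<bar>inverse t\<bar> < r\<close> poly_reflect_poly_nz[of "inverse t" p] by simp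
    moreover have "0 < inverse t ^ degree p"
      using \<open>t \<noteq> 0\<close> assms(1) by (simp add: zero_less_power_eq)
    ultimately show ?thesis
      using zero_less_mult_pos by blast
  qed
  then show ?thesis
    by blast
qed

lemma pos_val_point_place_Fract:
  assumes "0 < poly p t * poly q t"
  shows "pos_val (point_place (Some t) (Fract p q))"
proof -
  have "poly q t \<noteq> 0"
    using assms by auto
  then show ?thesis
    using assms by (simp add: point_place_def eval_place_Fract zero_less_divide_iff zero_less_mult_iff)
qed

lemma ratfun_field_interval:
  assumes R: "subfield R" and "r\<^sub>1 \<in> \<rat>" "r\<^sub>2 \<in> \<rat>" "r\<^sub>1 < r\<^sub>2"
  obtains c where "c \<in> ratfun_field R"
    "\<And>w. pos_val (point_place w c) \<longleftrightarrow> (\<exists>t. w = Some t \<and> r\<^sub>1 < t \<and> t < r\<^sub>2)"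
proof -
  define P where "P = [:- r\<^sub>1, 1:] * [:r\<^sub>2, - 1:]"
  have "r\<^sub>1 \<in> R" "r\<^sub>2 \<in> R"
    using subfield_Rats[OF R] assms(2,3) by blast+
  then have "poly_over R P"
    unfolding P_def using subfield_0[OF R] subfield_1[OF R] subfield_uminus[OF R]
    by (intro poly_over_mult[OF R]) (simp_all add: poly_over_pCons_iff[OF R] poly_over_0[OF R])
  moreover have "pos_val (point_place w (to_fract P)) \<longleftrightarrow> (\<exists>t. w = Some t \<and> r\<^sub>1 < t \<and> t < r\<^sub>2)" for w
  proof (cases w)
    case None
    moreover have "degree P = 2"
      by (simp add: P_def)
    ultimately show ?thesis
      by (simp add: point_place_def infty_place_to_fract)
  next
    case (Some t)
    have "poly P t = (t - r\<^sub>1) * (r\<^sub>2 - t)"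
      by (simp add: P_def algebra_simps)
    moreover have "0 < (t - r\<^sub>1) * (r\<^sub>2 - t) \<longleftrightarrow> r\<^sub>1 < t \<and> t < r\<^sub>2"
      using assms(4) by (auto simp: zero_less_mult_iff)
    ultimately show ?thesis
      using Some by (simp add: point_place_def eval_place_to_fract)
  qed
  ultimately show ?thesis
    using that to_fract_in_ratfun_field[OF R] by blast
qed

lemma ratfun_field_exterior:
  assumes R: "subfield R"
  obtains c where "c \<in> ratfun_field R"
    "\<And>w. pos_val (point_place w c) \<longleftrightarrow> (\<forall>t. w = Some t \<longrightarrow> real N < \<bar>t\<bar>)"
proof
  \<comment> \<open>(t^2 - N^2) / (1 + t^2), with value 1 at infinity\<close>
  define P :: "real poly" where "P = [:- (of_nat N * of_nat N), 0, 1:]"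
  define Q :: "real poly" where "Q = [:1, 0, 1:]"
  have "Q \<noteq> 0" "poly_over R P" "poly_over R Q"
    using subfield_0[OF R] subfield_1[OF R]
      subfield_uminus[OF R subfield_mult[OF R subfield_of_nat[OF R] subfield_of_nat[OF R]]]
    by (simp_all add: P_def Q_def poly_over_pCons_iff[OF R] poly_over_0[OF R])
  then show "Fract P Q \<in> ratfun_field R"
    by (simp add: ratfun_field_Fract)
  have Q_pos: "0 < poly Q t" for t
    by (simp add: Q_def add_pos_nonneg)
  have P_pos: "0 < poly P t \<longleftrightarrow> real N < \<bar>t\<bar>" for t
  proof -
    have "0 < poly P t \<longleftrightarrow> real N * real N < \<bar>t\<bar> * \<bar>t\<bar>"
      by (simp add: P_def algebra_simps)
    also have "\<dots> \<longleftrightarrow> real N < \<bar>t\<bar>"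
      using mult_strict_mono[of "real N" "\<bar>t\<bar>" "real N" "\<bar>t\<bar>"] mult_mono[of "\<bar>t\<bar>" N "\<bar>t\<bar>" N]
      by force
    finally show ?thesis .
  qed
  show "pos_val (point_place w (Fract P Q)) \<longleftrightarrow> (\<forall>t. w = Some t \<longrightarrow> real N < \<bar>t\<bar>)" for w
  proof (cases w)
    case None
    then show ?thesis
      using \<open>Q \<noteq> 0\<close> by (simp add: point_place_def infty_place_Fract P_def Q_def)
  next
    case (Some t)
    have "poly Q t \<noteq> 0"
      using Q_pos[of t] by simp
    then show ?thesis
      using Some Q_pos[of t] P_pos[of t] by (simp add: point_place_def eval_place_Fract zero_less_divide_iff)
  qed
qed

lemma eval_place_pos_nbhd:
  assumes R: "subfield R" and b: "pos_val (eval_place a b)"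
  shows "\<exists>c\<in>ratfun_field R. pos_val (eval_place a c) \<and>
           (\<forall>w. pos_val (point_place w c) \<longrightarrow> pos_val (point_place w b))"
proof -
  obtain u where "eval_place a b = Some u" "0 < u"
    using b by (cases "eval_place a b") auto
  then obtain p q where pq: "b = Fract p q" "poly q a \<noteq> 0" "0 < poly p a / poly q a"
    by (metis eval_place_SomeE)
  define f where "f t = poly p t * poly q t" for t
  have "0 < f a"
    using pq(3) by (simp add: f_def zero_less_divide_iff zero_less_mult_iff)
  moreover have "f \<midarrow>a\<rightarrow> f a"
    unfolding f_def by (intro tendsto_intros)
  ultimately obtain d where "0 < d" and d: "\<forall>t. \<bar>a - t\<bar> < d \<longrightarrow> 0 < f t"
    using LIM_fun_gt_zero by (metis abs_zero diff_self)
  obtain r\<^sub>1 where r\<^sub>1: "r\<^sub>1 \<in> \<rat>" "a - d < r\<^sub>1" "r\<^sub>1 < a"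
    using Rats_dense_in_real[of "a - d" a] \<open>0 < d\<close> by auto
  obtain r\<^sub>2 where r\<^sub>2: "r\<^sub>2 \<in> \<rat>" "a < r\<^sub>2" "r\<^sub>2 < a + d"
    using Rats_dense_in_real[of a "a + d"] \<open>0 < d\<close> by auto
  have "r\<^sub>1 < r\<^sub>2"
    using r\<^sub>1(3) r\<^sub>2(2) by simp
  then obtain c where c: "c \<in> ratfun_field R"
    "\<And>w. pos_val (point_place w c) \<longleftrightarrow> (\<exists>t. w = Some t \<and> r\<^sub>1 < t \<and> t < r\<^sub>2)"
    using ratfun_field_interval[OF R r\<^sub>1(1) r\<^sub>2(1)] by blast
  have "pos_val (point_place w b)" if pos: "pos_val (point_place w c)" for w
  proof -
    obtain t where "w = Some t" "r\<^sub>1 < t" "t < r\<^sub>2"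
      using pos c(2) by blast
    moreover from this have "\<bar>a - t\<bar> < d"
      using r\<^sub>1 r\<^sub>2 by simp
    ultimately show ?thesis
      using d pos_val_point_place_Fract pq(1) by (simp add: f_def)
  qed
  moreover have "pos_val (eval_place a c)"
    using c(2)[of "Some a"] r\<^sub>1 r\<^sub>2 by (simp add: point_place_def)
  ultimately show ?thesis
    using c(1) by blast
qed

lemma infty_place_pos_nbhd:
  assumes R: "subfield R" and b: "pos_val (infty_place b)"
  shows "\<exists>c\<in>ratfun_field R. pos_val (infty_place c) \<and>
           (\<forall>w. pos_val (point_place w c) \<longrightarrow> pos_val (point_place w b))"
proof -
  obtain p q where pq: "b = Fract p q" "q \<noteq> 0"
    by (cases b) auto
  then have "degree p \<le> degree q" and pos: "0 < coeff p (degree q) / lead_coeff q"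
    using b by (simp_all add: infty_place_Fract split: if_splits)
  moreover have "degree q \<le> degree p"
    using pos by (intro le_degree) auto
  ultimately have "degree p = degree q" and lead: "0 < lead_coeff p * lead_coeff q"
    by (simp_all add: zero_less_divide_iff zero_less_mult_iff)
  moreover have "p \<noteq> 0"
    using lead by auto
  ultimately have "even (degree (p * q))"
    using pq(2) by (simp add: degree_mult_eq)
  moreover have "0 < lead_coeff (p * q)"
    using lead by (simp only: lead_coeff_mult)
  ultimately obtain M where M: "\<forall>t. M < \<bar>t\<bar> \<longrightarrow> 0 < poly (p * q) t"
    using poly_pos_at_infinity by blast
  obtain N :: nat where "M < N"
    using reals_Archimedean2 by blast
  obtain c where c: "c \<in> ratfun_field R"
    "\<And>w. pos_val (point_place w c) \<longleftrightarrow> (\<forall>t. w = Some t \<longrightarrow> real N < \<bar>t\<bar>)"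
    using ratfun_field_exterior[OF R] by blast
  have "pos_val (point_place w b)" if pos: "pos_val (point_place w c)" for w
  proof (cases w)
    case None
    then show ?thesis
      using b by (simp add: point_place_def)
  next
    case (Some t)
    then show ?thesis
      using pos c(2) M \<open>M < N\<close> pos_val_point_place_Fract pq(1) by (simp add: poly_mult)
  qed
  moreover have "pos_val (infty_place c)"
    using c(2)[of None] by (simp add: point_place_def)
  ultimately show ?thesis
    using c(1) by blast
qed

lemma point_place_pos_nbhd:
  assumes "subfield R" "pos_val (point_place w\<^sub>0 b)"
  shows "\<exists>c\<in>ratfun_field R. pos_val (point_place w\<^sub>0 c) \<and>
           (\<forall>w. pos_val (point_place w c) \<longrightarrow> pos_val (point_place w b))"
  using assms eval_place_pos_nbhd infty_place_pos_nbhd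
  by (cases w\<^sub>0) (simp_all add: point_place_def)

lemma is_const_ext_iff:
  assumes F: "subfield F"
  shows "is_const_ext F \<zeta> \<xi> \<longleftrightarrow> \<xi> = place_restrict (ratfun_field F) (point_place (\<zeta> var_y))"
proof
  assume "is_const_ext F \<zeta> \<xi>"
  then show "\<xi> = place_restrict (ratfun_field F) (point_place (\<zeta> var_y))"
    using ratfun_place_eq_point_place[OF F] unfolding is_const_ext_def by metis
next
  assume "\<xi> = place_restrict (ratfun_field F) (point_place (\<zeta> var_y))"
  then show "is_const_ext F \<zeta> \<xi>"
    unfolding is_const_ext_def
    using place_restrict_point_place[OF F] const_fract_in_ratfun_field[OF F] var_y_in_ratfun_field[OF F]
    by (simp add: place_restrict_def point_place_const_fract point_place_var_y)
qed

lemma const_ext_eq: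
  assumes "subfield F"
  shows "const_ext F \<zeta> = place_restrict (ratfun_field F) (point_place (\<zeta> var_y))"
  unfolding const_ext_def is_const_ext_iff[OF assms] by simp

lemma continuous_map_const_ext:
  assumes RC: "real_closed_subfield R" and F: "subfield F"
  shows "continuous_map (places_top (ratfun_field R)) (places_top (ratfun_field F)) (const_ext F)"
proof (rule continuous_map_places_topI)
  show "const_ext F \<zeta> \<in> places (ratfun_field F)" for \<zeta>
    using place_restrict_point_place[OF F] by (simp add: const_ext_eq[OF F])
  fix b assume "b \<in> ratfun_field F"
  define U where "U = {\<zeta> \<in> places (ratfun_field R). pos_val (point_place (\<zeta> var_y) b)}"
  have "openin (places_top (ratfun_field R)) U"
  proof (subst openin_subopen, intro ballI)
    fix \<zeta> assume "\<zeta> \<in> U"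
    then obtain c where c: "c \<in> ratfun_field R" "pos_val (point_place (\<zeta> var_y) c)"
      "\<forall>w. pos_val (point_place w c) \<longrightarrow> pos_val (point_place w b)"
      using point_place_pos_nbhd[OF real_closed_subfield_imp_subfield[OF RC], of "\<zeta> var_y" b]
      unfolding U_def by blast
    have "\<zeta> \<in> Hsub (ratfun_field R) c" "Hsub (ratfun_field R) c \<subseteq> U"
      using \<open>\<zeta> \<in> U\<close> c real_closed_ratfun_place_apply[OF RC] by (auto simp: Hsub_eq U_def)
    then show "\<exists>T. openin (places_top (ratfun_field R)) T \<and> \<zeta> \<in> T \<and> T \<subseteq> U"
      using openin_places_top_Hsub[OF c(1)] by blast
  qed
  moreover have "{\<zeta> \<in> topspace (places_top (ratfun_field R)). pos_val (const_ext F \<zeta> b)} = U"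
    using \<open>b \<in> ratfun_field F\<close> by (simp add: U_def const_ext_eq[OF F] place_restrict_def)
  ultimately show "openin (places_top (ratfun_field R))
      {\<zeta> \<in> topspace (places_top (ratfun_field R)). pos_val (const_ext F \<zeta> b)}"
    by simp
qed

context
  fixes R F :: "real set"
  assumes RC: "real_closed_subfield R" and F: "subfield F" and "R \<subseteq> F"
begin

lemma const_ext_restrict:
  assumes "\<zeta> \<in> places (ratfun_field R)" "a \<in> ratfun_field R"
  shows "const_ext F \<zeta> a = \<zeta> a"
  using assms real_closed_ratfun_place_apply[OF RC] ratfun_field_mono[OF \<open>R \<subseteq> F\<close>]
  by (auto simp: const_ext_eq[OF F] place_restrict_def)

lemma inj_on_const_ext: "inj_on (const_ext F) (places (ratfun_field R))"
proof (rule inj_onI)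
  fix \<zeta>\<^sub>1 \<zeta>\<^sub>2
  assume \<zeta>: "\<zeta>\<^sub>1 \<in> places (ratfun_field R)" "\<zeta>\<^sub>2 \<in> places (ratfun_field R)"
    and "const_ext F \<zeta>\<^sub>1 = const_ext F \<zeta>\<^sub>2"
  then have "\<zeta>\<^sub>1 var_y = \<zeta>\<^sub>2 var_y"
    using const_ext_restrict var_y_in_ratfun_field[OF real_closed_subfield_imp_subfield[OF RC]]
    by metis
  then show "\<zeta>\<^sub>1 = \<zeta>\<^sub>2"
    using real_closed_ratfun_place_eq_point_place[OF RC \<zeta>(1)]
      real_closed_ratfun_place_eq_point_place[OF RC \<zeta>(2)] by metis
qed

lemma homeomorphic_map_const_ext:
  assumes RC_F: "real_closed_subfield F"
  shows "homeomorphic_map (places_top (ratfun_field R)) (places_top (ratfun_field F)) (const_ext F)"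
  unfolding homeomorphic_map_maps homeomorphic_maps_def
proof (intro exI conjI ballI)
  note R = real_closed_subfield_imp_subfield[OF RC]
  show "continuous_map (places_top (ratfun_field F)) (places_top (ratfun_field R))
      (place_restrict (ratfun_field R))"
    using continuous_map_place_restrict subfield_ratfun_field[OF R] subfield_ratfun_field[OF F]
      ratfun_field_mono[OF \<open>R \<subseteq> F\<close>] by blast
  show "place_restrict (ratfun_field R) (const_ext F \<zeta>) = \<zeta>"
    if "\<zeta> \<in> topspace (places_top (ratfun_field R))" for \<zeta>
  proof
    fix a
    show "place_restrict (ratfun_field R) (const_ext F \<zeta>) a = \<zeta> a"
    proof (cases "a \<in> ratfun_field R")
      case True
      then show ?thesis
        using const_ext_restrict that by (simp add: place_restrict_def)
    next
      case False
      then show ?thesis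
        using place.outside[of "ratfun_field R" \<zeta> a] that
          place_iff_mem_places[OF subfield_ratfun_field[OF R]] by (simp add: place_restrict_def)
    qed
  qed
  show "const_ext F (place_restrict (ratfun_field R) \<xi>) = \<xi>"
    if "\<xi> \<in> topspace (places_top (ratfun_field F))" for \<xi>
  proof -
    have "const_ext F (place_restrict (ratfun_field R) \<xi>)
        = place_restrict (ratfun_field F) (point_place (\<xi> var_y))"
      using var_y_in_ratfun_field[OF R] by (simp add: const_ext_eq[OF F] place_restrict_def)
    also have "\<dots> = \<xi>"
      using real_closed_ratfun_place_eq_point_place[OF RC_F, of \<xi>] that by simp
    finally show ?thesis .
  qed
qed (rule continuous_map_const_ext[OF RC F])

end

theorem lemma6p1:
  fixes R F :: "real set"
  assumes "real_closed_subfield R"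
    and "real_subfield F"
    and "R \<subseteq> F"
  shows "(\<forall>\<zeta>\<in>places (ratfun_field R). \<exists>!\<xi>. is_const_ext F \<zeta> \<xi>)
    \<and> continuous_map (places_top (ratfun_field R)) (places_top (ratfun_field F)) (const_ext F)
    \<and> inj_on (const_ext F) (places (ratfun_field R))
    \<and> (\<forall>\<zeta>\<in>places (ratfun_field R). \<forall>a\<in>ratfun_field R. const_ext F \<zeta> a = \<zeta> a)
    \<and> (real_closed_subfield F \<longrightarrow>
        homeomorphic_map (places_top (ratfun_field R)) (places_top (ratfun_field F)) (const_ext F))"
proof -
  have F: "subfield F"
    using assms(2) by (simp add: real_subfield_eq_subfield)
  show ?thesis
    using is_const_ext_iff[OF F] continuous_map_const_ext[OF assms(1) F]
      inj_on_const_ext[OF assms(1) F assms(3)] const_ext_restrict[OF assms(1) F assms(3)]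
      homeomorphic_map_const_ext[OF assms(1) F assms(3)]
    by simp
qed

end
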